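(* Let $\mu$ be a locally finite Borel measure on $\mathbb{R}$. Then $\mu$ is absolutely decaying if and only if it is both Federer and efd.
   Context: $B(x,\rho)$ denotes the closed ball of radius $\rho$ about $x$. $\mu$ is $(C,\gamma)$-absolutely decaying ($C,\gamma>0$) if there is $\rho_0>0$ such that for all $0<\rho\le\rho_0$, $x\in\operatorname{supp}\mu$, $y\in\mathbb{R}$, $\varepsilon>0$: $\mu(B(x,\rho)\cap B(y,\varepsilon\rho))<C\varepsilon^\gamma\mu(B(x,\rho))$; $\mu$ is absolutely decaying if it is $(C,\gamma)$-absolutely decaying for some $C,\gamma>0$. $\mu$ is Federer (resp. efd) if there exist $\rho_0>0$ and $0<\varepsilon,\delta<1$ such that for every $0<\rho\le\rho_0$ and every $x\in\operatorname{supp}\mu$, the ratio $\mu(B(x,\varepsilon\rho))/\mu(B(x,\rho))$ is at least (resp. at most) $\delta$. *)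

theory Defs
  imports "HOL-Analysis.Analysis"
begin

definition locally_finite_borel :: "real measure \<Rightarrow> bool" where
  "locally_finite_borel \<mu> \<longleftrightarrow> sets \<mu> = sets borel \<and>
     (\<forall>x. \<exists>e>0. emeasure \<mu> (ball x e) < \<infinity>)"

definition msupp :: "real measure \<Rightarrow> real set" where
  "msupp \<mu> = {x. \<forall>e>0. emeasure \<mu> (ball x e) > 0}"

definition abs_decaying_with :: "real measure \<Rightarrow> real \<Rightarrow> real \<Rightarrow> bool" where
  "abs_decaying_with \<mu> C \<gamma> \<longleftrightarrow> C > 0 \<and> \<gamma> > 0 \<and>
     (\<exists>\<rho>0>0. \<forall>\<rho> x y \<epsilon>. 0 < \<rho> \<and> \<rho> \<le> \<rho>0 \<and> x \<in> msupp \<mu> \<and> \<epsilon> > 0 \<longrightarrow>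
        emeasure \<mu> (cball x \<rho> \<inter> cball y (\<epsilon> * \<rho>))
          < ennreal (C * \<epsilon> powr \<gamma>) * emeasure \<mu> (cball x \<rho>))"

definition abs_decaying :: "real measure \<Rightarrow> bool" where
  "abs_decaying \<mu> \<longleftrightarrow> (\<exists>C \<gamma>. abs_decaying_with \<mu> C \<gamma>)"

definition federer :: "real measure \<Rightarrow> bool" where
  "federer \<mu> \<longleftrightarrow> (\<exists>\<rho>0>0. \<exists>\<epsilon> \<delta>. 0 < \<epsilon> \<and> \<epsilon> < 1 \<and> 0 < \<delta> \<and> \<delta> < 1 \<and>
     (\<forall>\<rho> x. 0 < \<rho> \<and> \<rho> \<le> \<rho>0 \<and> x \<in> msupp \<mu> \<longrightarrow>
        measure \<mu> (cball x (\<epsilon> * \<rho>)) / measure \<mu> (cball x \<rho>) \<ge> \<delta>))"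

definition efd :: "real measure \<Rightarrow> bool" where
  "efd \<mu> \<longleftrightarrow> (\<exists>\<rho>0>0. \<exists>\<epsilon> \<delta>. 0 < \<epsilon> \<and> \<epsilon> < 1 \<and> 0 < \<delta> \<and> \<delta> < 1 \<and>
     (\<forall>\<rho> x. 0 < \<rho> \<and> \<rho> \<le> \<rho>0 \<and> x \<in> msupp \<mu> \<longrightarrow>
        measure \<mu> (cball x (\<epsilon> * \<rho>)) / measure \<mu> (cball x \<rho>) \<le> \<delta>))"

end

theory Submission
  imports Defs
begin

text \<open>Absolute decay at one small ratio \<open>\<epsilon>\<close> gives both conditions at once: the concentric
  ball \<open>B(x,\<epsilon>\<rho>)\<close> carries at most the fraction \<open>C \<epsilon>\<^sup>\<gamma>\<close> of the mass of \<open>B(x,\<rho>)\<close> (efd), and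
  \<open>B(x,\<rho>)\<close> is covered by \<open>B(x,(1-\<epsilon>)\<rho>)\<close> and two end caps of radius \<open>\<epsilon>\<rho>\<close> (Federer).
  Conversely, iterating efd gives power decay \<open>\<mu>(B(z,s r)) < s\<^sup>\<gamma> \<mu>(B(z,r)) / \<delta>\<close> at support
  points \<open>z\<close>, with \<open>\<gamma> = ln \<delta> / ln \<epsilon>\<close>. If \<open>B(x,\<rho>) \<inter> B(y,\<epsilon>\<rho>)\<close> contains a support point \<open>z\<close>, it lies
  in a ball about \<open>z\<close> of radius \<open>2\<epsilon>\<rho>\<close>, which power decay compares with \<open>B(z,c\<rho>) \<subseteq> B(x,\<rho>/\<epsilon>\<^sub>F)\<close>;
  the Federer condition brings this back to \<open>B(x,\<rho>)\<close>. Otherwise the intersection is a compact set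
  missing the support, hence null.\<close>

lemma locally_finite_borel_sets:
  "locally_finite_borel \<mu> \<Longrightarrow> sets \<mu> = sets borel"
  by (simp add: locally_finite_borel_def)

lemma emeasure_compact_le_sum_balls:
  assumes "sets \<mu> = sets borel" and "compact K" and "\<And>x. x \<in> K \<Longrightarrow> e x > 0"
  obtains D where "D \<subseteq> K" "finite D" "emeasure \<mu> K \<le> (\<Sum>x\<in>D. emeasure \<mu> (ball x (e x)))"
proof -
  have "K \<subseteq> (\<Union>x\<in>K. ball x (e x))" using assms(3) by auto
  then obtain D where D: "D \<subseteq> K" "finite D" "K \<subseteq> (\<Union>x\<in>D. ball x (e x))"
    using compactE_image[OF assms(2), of K "\<lambda>x. ball x (e x)"] by auto
  have balls: "ball x r \<in> sets \<mu>" for x r using assms(1) by simp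
  have "emeasure \<mu> K \<le> emeasure \<mu> (\<Union>x\<in>D. ball x (e x))"
    using D(2,3) balls by (intro emeasure_mono sets.finite_UN) auto
  also have "\<dots> \<le> (\<Sum>x\<in>D. emeasure \<mu> (ball x (e x)))"
    using D(2) balls by (intro emeasure_subadditive_finite) auto
  finally show ?thesis by (rule that[OF D(1,2)])
qed

lemma locally_finite_borel_compact_finite:
  assumes "locally_finite_borel \<mu>" and "compact K"
  shows "emeasure \<mu> K < \<infinity>"
proof -
  obtain e where e: "\<And>x. e x > 0" "\<And>x. emeasure \<mu> (ball x (e x)) < \<infinity>"
    using assms(1) unfolding locally_finite_borel_def by metis
  obtain D where "D \<subseteq> K" "finite D" and K: "emeasure \<mu> K \<le> (\<Sum>x\<in>D. emeasure \<mu> (ball x (e x)))"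
    by (rule emeasure_compact_le_sum_balls[OF locally_finite_borel_sets[OF assms(1)] assms(2) e(1)])
  have "(\<Sum>x\<in>D. emeasure \<mu> (ball x (e x))) < \<infinity>"
    using e(2) \<open>finite D\<close> by (simp add: sum_Pinfty less_top)
  with K show ?thesis by (rule order.strict_trans1)
qed

lemma emeasure_compact_outside_msupp:
  assumes "sets \<mu> = sets borel" and "compact K" and "K \<inter> msupp \<mu> = {}"
  shows "emeasure \<mu> K = 0"
proof -
  have "\<exists>e>0. emeasure \<mu> (ball x e) = 0" if "x \<in> K" for x
  proof -
    have "x \<notin> msupp \<mu>" using that assms(3) by blast
    then show ?thesis unfolding msupp_def by (auto simp: not_less)
  qed
  then obtain e where e: "\<And>x. x \<in> K \<Longrightarrow> e x > 0" "\<And>x. x \<in> K \<Longrightarrow> emeasure \<mu> (ball x (e x)) = 0"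
    by metis
  obtain D where "D \<subseteq> K" "finite D" "emeasure \<mu> K \<le> (\<Sum>x\<in>D. emeasure \<mu> (ball x (e x)))"
    by (rule emeasure_compact_le_sum_balls[OF assms(1,2) e(1)])
  then show ?thesis using e(2) by (simp add: subset_iff)
qed

lemma locally_finite_borel_emeasure_bounded:
  assumes "locally_finite_borel \<mu>" and "bounded A"
  shows "emeasure \<mu> A = ennreal (measure \<mu> A)"
proof -
  obtain x r where "A \<subseteq> cball x r" using assms(2) bounded_subset_cball by blast
  moreover have "cball x r \<in> sets \<mu>" using locally_finite_borel_sets[OF assms(1)] by simp
  ultimately have "emeasure \<mu> A \<le> emeasure \<mu> (cball x r)" by (rule emeasure_mono)
  also have "\<dots> < \<infinity>" using locally_finite_borel_compact_finite[OF assms(1)] by simp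
  finally show ?thesis by (intro emeasure_eq_ennreal_measure) auto
qed

lemma locally_finite_borel_measure_mono_cball:
  assumes "locally_finite_borel \<mu>" and "A \<subseteq> cball x r" and "A \<in> sets \<mu>"
  shows "measure \<mu> A \<le> measure \<mu> (cball x r)"
proof (rule measure_mono_fmeasurable[OF assms(2,3)])
  show "cball x r \<in> fmeasurable \<mu>"
    using locally_finite_borel_sets[OF assms(1)] locally_finite_borel_compact_finite[OF assms(1)]
    by (intro fmeasurableI) simp_all
qed

lemma measure_cball_msupp_pos:
  assumes "locally_finite_borel \<mu>" and "x \<in> msupp \<mu>" and "r > 0"
  shows "measure \<mu> (cball x r) > 0"
proof -
  have "0 < emeasure \<mu> (ball x r)" using assms(2,3) unfolding msupp_def by auto
  also have "\<dots> \<le> emeasure \<mu> (cball x r)"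
    using locally_finite_borel_sets[OF assms(1)] by (intro emeasure_mono) auto
  also have "\<dots> = ennreal (measure \<mu> (cball x r))"
    by (rule locally_finite_borel_emeasure_bounded[OF assms(1)]) simp
  finally show ?thesis by simp
qed

lemma abs_decaying_with_iff_measure:
  assumes "locally_finite_borel \<mu>"
  shows "abs_decaying_with \<mu> C \<gamma> \<longleftrightarrow> C > 0 \<and> \<gamma> > 0 \<and>
     (\<exists>\<rho>0>0. \<forall>\<rho> x y \<epsilon>. 0 < \<rho> \<and> \<rho> \<le> \<rho>0 \<and> x \<in> msupp \<mu> \<and> \<epsilon> > 0 \<longrightarrow>
        measure \<mu> (cball x \<rho> \<inter> cball y (\<epsilon> * \<rho>)) < C * \<epsilon> powr \<gamma> * measure \<mu> (cball x \<rho>))"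
proof (cases "C > 0")
  case True
  have "emeasure \<mu> (cball x \<rho> \<inter> cball y (\<epsilon> * \<rho>)) < ennreal (C * \<epsilon> powr \<gamma>) * emeasure \<mu> (cball x \<rho>)
    \<longleftrightarrow> measure \<mu> (cball x \<rho> \<inter> cball y (\<epsilon> * \<rho>)) < C * \<epsilon> powr \<gamma> * measure \<mu> (cball x \<rho>)"
    for x y \<rho> \<epsilon>
    using True locally_finite_borel_emeasure_bounded[OF assms, of "cball x \<rho>"]
      locally_finite_borel_emeasure_bounded[OF assms, of "cball x \<rho> \<inter> cball y (\<epsilon> * \<rho>)"]
    by (simp add: bounded_Int ennreal_mult[symmetric] ennreal_less_iff)
  then show ?thesis unfolding abs_decaying_with_def by presburger
qed (simp add: abs_decaying_with_def)

lemma exists_small_powr_le: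
  fixes C \<gamma> q :: real
  assumes "C > 0" and "\<gamma> > 0" and "q > 0"
  obtains \<epsilon> where "0 < \<epsilon>" "\<epsilon> \<le> 1/2" "C * \<epsilon> powr \<gamma> \<le> q"
proof -
  define \<epsilon> where "\<epsilon> = min (1/2) ((q / C) powr (1/\<gamma>))"
  have "\<epsilon> powr \<gamma> \<le> ((q / C) powr (1/\<gamma>)) powr \<gamma>"
    using assms by (intro powr_mono2) (auto simp: \<epsilon>_def)
  also have "\<dots> = q / C" using assms by (simp add: powr_powr)
  finally have "C * \<epsilon> powr \<gamma> \<le> q" using assms by (simp add: le_divide_eq mult.commute)
  then show ?thesis using assms by (intro that) (auto simp: \<epsilon>_def)
qed

lemma abs_decaying_with_imp_efd:
  assumes "locally_finite_borel \<mu>" and "abs_decaying_with \<mu> C \<gamma>"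
  shows "efd \<mu>"
proof -
  obtain \<rho>0 where "\<rho>0 > 0" and C: "C > 0" and \<gamma>: "\<gamma> > 0" and decay:
    "\<And>\<rho> x y \<epsilon>. 0 < \<rho> \<Longrightarrow> \<rho> \<le> \<rho>0 \<Longrightarrow> x \<in> msupp \<mu> \<Longrightarrow> \<epsilon> > 0 \<Longrightarrow>
      measure \<mu> (cball x \<rho> \<inter> cball y (\<epsilon> * \<rho>)) < C * \<epsilon> powr \<gamma> * measure \<mu> (cball x \<rho>)"
    using assms unfolding abs_decaying_with_iff_measure[OF assms(1)] by metis
  obtain \<epsilon> where \<epsilon>: "0 < \<epsilon>" "\<epsilon> \<le> 1/2" "C * \<epsilon> powr \<gamma> \<le> 1/2"
    using exists_small_powr_le[OF C \<gamma>, of "1/2"] by auto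
  have "measure \<mu> (cball x (\<epsilon> * \<rho>)) / measure \<mu> (cball x \<rho>) \<le> 1/2"
    if "0 < \<rho>" "\<rho> \<le> \<rho>0" "x \<in> msupp \<mu>" for \<rho> x
  proof -
    have M: "measure \<mu> (cball x \<rho>) > 0" by (rule measure_cball_msupp_pos[OF assms(1) that(3,1)])
    have "\<epsilon> * \<rho> \<le> \<rho>" using \<epsilon> that(1) by simp
    then have "cball x \<rho> \<inter> cball x (\<epsilon> * \<rho>) = cball x (\<epsilon> * \<rho>)" by auto
    then have "measure \<mu> (cball x (\<epsilon> * \<rho>)) < C * \<epsilon> powr \<gamma> * measure \<mu> (cball x \<rho>)"
      using decay[OF that \<epsilon>(1), of x] by simp
    also have "\<dots> \<le> 1/2 * measure \<mu> (cball x \<rho>)" using \<epsilon>(3) M by (intro mult_right_mono) auto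
    finally show ?thesis using M by (simp add: divide_le_eq)
  qed
  then show ?thesis unfolding efd_def using \<open>\<rho>0 > 0\<close> \<epsilon>
    by (intro exI[of _ \<rho>0] conjI exI[of _ \<epsilon>] exI[of _ "1/2::real"]) auto
qed

lemma abs_decaying_with_imp_federer:
  assumes "locally_finite_borel \<mu>" and "abs_decaying_with \<mu> C \<gamma>"
  shows "federer \<mu>"
proof -
  obtain \<rho>0 where "\<rho>0 > 0" and C: "C > 0" and \<gamma>: "\<gamma> > 0" and decay:
    "\<And>\<rho> x y \<epsilon>. 0 < \<rho> \<Longrightarrow> \<rho> \<le> \<rho>0 \<Longrightarrow> x \<in> msupp \<mu> \<Longrightarrow> \<epsilon> > 0 \<Longrightarrow>
      measure \<mu> (cball x \<rho> \<inter> cball y (\<epsilon> * \<rho>)) < C * \<epsilon> powr \<gamma> * measure \<mu> (cball x \<rho>)"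
    using assms unfolding abs_decaying_with_iff_measure[OF assms(1)] by metis
  obtain \<epsilon> where \<epsilon>: "0 < \<epsilon>" "\<epsilon> \<le> 1/2" "C * \<epsilon> powr \<gamma> \<le> 1/4"
    using exists_small_powr_le[OF C \<gamma>, of "1/4"] by auto
  have "measure \<mu> (cball x ((1 - \<epsilon>) * \<rho>)) / measure \<mu> (cball x \<rho>) \<ge> 1/2"
    if "0 < \<rho>" "\<rho> \<le> \<rho>0" "x \<in> msupp \<mu>" for \<rho> x
  proof -
    let ?B = "cball x \<rho>" and ?I = "cball x ((1 - \<epsilon>) * \<rho>)"
    let ?R = "?B \<inter> cball (x + \<rho>) (\<epsilon> * \<rho>)" and ?L = "?B \<inter> cball (x - \<rho>) (\<epsilon> * \<rho>)"
    have M: "measure \<mu> ?B > 0" by (rule measure_cball_msupp_pos[OF assms(1) that(3,1)])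
    have cap: "measure \<mu> (?B \<inter> cball y (\<epsilon> * \<rho>)) \<le> 1/4 * measure \<mu> ?B" for y
      using decay[OF that \<epsilon>(1), of y] mult_right_mono[OF \<epsilon>(3), of "measure \<mu> ?B"] M by linarith
    \<comment> \<open>A point of the ball outside the inner ball lies within \<open>\<epsilon>\<rho>\<close> of an endpoint.\<close>
    have "0 \<le> \<epsilon> * \<rho>" "\<epsilon> * \<rho> \<le> \<rho>" using \<epsilon> that(1) by simp_all
    then have cover: "?B = ?I \<union> ?R \<union> ?L"
      by (auto simp: dist_real_def abs_le_iff left_diff_distrib)
    have sets: "?I \<in> sets \<mu>" "?R \<in> sets \<mu>" "?L \<in> sets \<mu>"
      using locally_finite_borel_sets[OF assms(1)] by simp_all
    have "measure \<mu> ?B \<le> measure \<mu> (?I \<union> ?R) + measure \<mu> ?L"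
      by (subst cover) (intro measure_Un_le sets.Un sets)
    also have "\<dots> \<le> measure \<mu> ?I + measure \<mu> ?R + measure \<mu> ?L"
      using sets by (intro add_right_mono measure_Un_le)
    finally have "measure \<mu> ?B \<le> measure \<mu> ?I + measure \<mu> ?R + measure \<mu> ?L" .
    then have "1/2 * measure \<mu> ?B \<le> measure \<mu> ?I" using cap[of "x + \<rho>"] cap[of "x - \<rho>"] by linarith
    then show ?thesis using M by (simp add: le_divide_eq)
  qed
  then show ?thesis unfolding federer_def using \<open>\<rho>0 > 0\<close> \<epsilon>
    by (intro exI[of _ \<rho>0] conjI exI[of _ "1 - \<epsilon>"] exI[of _ "1/2::real"]) auto
qed

lemma efd_iterate:
  assumes "locally_finite_borel \<mu>" and "0 < \<epsilon>" "\<epsilon> < 1" "0 \<le> \<delta>"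
    and efd: "\<And>\<rho> x. 0 < \<rho> \<Longrightarrow> \<rho> \<le> \<rho>0 \<Longrightarrow> x \<in> msupp \<mu> \<Longrightarrow>
        measure \<mu> (cball x (\<epsilon> * \<rho>)) / measure \<mu> (cball x \<rho>) \<le> \<delta>"
    and "z \<in> msupp \<mu>" "0 < r" "r \<le> \<rho>0"
  shows "measure \<mu> (cball z (\<epsilon> ^ m * r)) \<le> \<delta> ^ m * measure \<mu> (cball z r)"
proof (induction m)
  case (Suc m)
  have "\<epsilon> ^ m \<le> 1" using assms(2,3) by (simp add: power_le_one)
  then have "\<epsilon> ^ m * r \<le> r" using assms(7) by (simp add: mult_le_cancel_right1)
  then have r: "0 < \<epsilon> ^ m * r" "\<epsilon> ^ m * r \<le> \<rho>0" using assms(2,7,8) by (simp, linarith)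
  have "measure \<mu> (cball z (\<epsilon> * (\<epsilon> ^ m * r))) \<le> \<delta> * measure \<mu> (cball z (\<epsilon> ^ m * r))"
    using efd[OF r assms(6)] measure_cball_msupp_pos[OF assms(1,6) r(1)] by (simp add: divide_le_eq)
  also have "\<dots> \<le> \<delta> * (\<delta> ^ m * measure \<mu> (cball z r))"
    using Suc.IH assms(4) by (rule mult_left_mono)
  finally show ?case by (simp add: mult.assoc)
qed simp

lemma power_bracket:
  fixes \<epsilon> s :: real
  assumes "0 < \<epsilon>" "\<epsilon> < 1" "0 < s" "s \<le> 1"
  obtains m where "\<epsilon> ^ Suc m < s" "s \<le> \<epsilon> ^ m"
proof -
  obtain n where "\<epsilon> ^ n < s" using real_arch_pow_inv[OF assms(3,2)] by blast
  define k where "k = (LEAST n. \<epsilon> ^ n < s)"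
  have k: "\<epsilon> ^ k < s" unfolding k_def by (rule LeastI) fact
  then have "k \<noteq> 0" using assms(4) by (intro notI) simp
  then obtain m where m: "k = Suc m" using not0_implies_Suc by blast
  have "s \<le> \<epsilon> ^ m"
    using not_less_Least[of m "\<lambda>n. \<epsilon> ^ n < s"] unfolding k_def[symmetric] m by simp
  with k m show ?thesis by (intro that) simp_all
qed

lemma efd_power_decay:
  assumes "locally_finite_borel \<mu>" and "0 < \<epsilon>" "\<epsilon> < 1" "0 < \<delta>" "\<delta> < 1"
    and efd: "\<And>\<rho> x. 0 < \<rho> \<Longrightarrow> \<rho> \<le> \<rho>0 \<Longrightarrow> x \<in> msupp \<mu> \<Longrightarrow>
        measure \<mu> (cball x (\<epsilon> * \<rho>)) / measure \<mu> (cball x \<rho>) \<le> \<delta>"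
    and "z \<in> msupp \<mu>" "0 < r" "r \<le> \<rho>0" and "0 < s" "s \<le> 1"
  shows "measure \<mu> (cball z (s * r)) < s powr (ln \<delta> / ln \<epsilon>) / \<delta> * measure \<mu> (cball z r)"
proof -
  define \<gamma> where "\<gamma> = ln \<delta> / ln \<epsilon>"
  obtain m where m: "\<epsilon> ^ Suc m < s" "s \<le> \<epsilon> ^ m" using power_bracket[OF assms(2,3,10,11)] .
  have M: "measure \<mu> (cball z r) > 0" by (rule measure_cball_msupp_pos[OF assms(1,7,8)])
  have "\<gamma> > 0" using assms(2-5) by (simp add: \<gamma>_def divide_neg_neg)
  have "(\<epsilon> ^ k) powr \<gamma> = \<delta> ^ k" for k
  proof -
    have "(\<epsilon> ^ k) powr \<gamma> = (\<epsilon> powr real k) powr \<gamma>" by (simp only: powr_realpow[OF assms(2)])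
    also have "\<dots> = (\<epsilon> powr \<gamma>) ^ k" using assms(2) by (simp add: powr_power powr_powr mult.commute)
    also have "\<epsilon> powr \<gamma> = \<delta>" using assms(2-5) by (simp add: \<gamma>_def powr_def)
    finally show ?thesis .
  qed
  from this[of "Suc m"] have "\<delta> ^ Suc m = (\<epsilon> ^ Suc m) powr \<gamma>" by (rule sym)
  also have "\<dots> < s powr \<gamma>" using m(1) assms(2) \<open>\<gamma> > 0\<close> by (intro powr_less_mono2) auto
  finally have \<delta>m: "\<delta> ^ m < s powr \<gamma> / \<delta>" using assms(4) by (simp add: less_divide_eq mult.commute)
  have "measure \<mu> (cball z (s * r)) \<le> measure \<mu> (cball z (\<epsilon> ^ m * r))"
    using m(2) assms(8) locally_finite_borel_sets[OF assms(1)]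
    by (intro locally_finite_borel_measure_mono_cball[OF assms(1)] subset_cball mult_right_mono) auto
  also have "\<dots> \<le> \<delta> ^ m * measure \<mu> (cball z r)"
    using assms(4) by (intro efd_iterate[OF assms(1-3) _ efd assms(7-9)]) simp
  also have "\<dots> < s powr \<gamma> / \<delta> * measure \<mu> (cball z r)"
    using \<delta>m M by (rule mult_strict_right_mono)
  finally show ?thesis unfolding \<gamma>_def .
qed

lemma federer_enlarge:
  assumes "locally_finite_borel \<mu>" and "0 < \<epsilon>"
    and federer: "\<And>\<rho> x. 0 < \<rho> \<Longrightarrow> \<rho> \<le> R \<Longrightarrow> x \<in> msupp \<mu> \<Longrightarrow>
        measure \<mu> (cball x (\<epsilon> * \<rho>)) / measure \<mu> (cball x \<rho>) \<ge> \<delta>"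
    and "x \<in> msupp \<mu>" "0 < r" "r \<le> \<epsilon> * R"
  shows "\<delta> * measure \<mu> (cball x (r / \<epsilon>)) \<le> measure \<mu> (cball x r)"
proof -
  have r: "0 < r / \<epsilon>" "r / \<epsilon> \<le> R"
    using assms(2,5,6) by (simp_all add: divide_le_eq mult.commute)
  show ?thesis
    using federer[OF r assms(4)] measure_cball_msupp_pos[OF assms(1,4) r(1)] assms(2)
    by (simp add: le_divide_eq)
qed

lemma federer_efd_ball_near_support:
  assumes "locally_finite_borel \<mu>"
    and \<epsilon>F: "0 < \<epsilon>F" "\<epsilon>F < 1" and "0 < \<delta>F"
    and fed: "\<And>\<rho> x. 0 < \<rho> \<Longrightarrow> \<rho> \<le> \<rho>F \<Longrightarrow> x \<in> msupp \<mu> \<Longrightarrow>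
        measure \<mu> (cball x (\<epsilon>F * \<rho>)) / measure \<mu> (cball x \<rho>) \<ge> \<delta>F"
    and \<epsilon>E: "0 < \<epsilon>E" "\<epsilon>E < 1" and \<delta>E: "0 < \<delta>E" "\<delta>E < 1"
    and efd: "\<And>\<rho> x. 0 < \<rho> \<Longrightarrow> \<rho> \<le> \<rho>E \<Longrightarrow> x \<in> msupp \<mu> \<Longrightarrow>
        measure \<mu> (cball x (\<epsilon>E * \<rho>)) / measure \<mu> (cball x \<rho>) \<le> \<delta>E"
    and x: "x \<in> msupp \<mu>" and z: "z \<in> msupp \<mu>" "dist x z \<le> \<rho>"
    and \<rho>: "0 < \<rho>" "\<rho> \<le> \<epsilon>F * \<rho>F" "(1 / \<epsilon>F - 1) * \<rho> \<le> \<rho>E"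
    and t: "0 < t" "t \<le> 1"
  shows "measure \<mu> (cball z (t * ((1 / \<epsilon>F - 1) * \<rho>)))
    < t powr (ln \<delta>E / ln \<epsilon>E) / (\<delta>E * \<delta>F) * measure \<mu> (cball x \<rho>)"
proof -
  define c where "c = 1 / \<epsilon>F - 1"
  have c\<rho>: "0 < c * \<rho>" "c * \<rho> \<le> \<rho>E" using \<epsilon>F \<rho> by (simp_all add: c_def)
  let ?k = "t powr (ln \<delta>E / ln \<epsilon>E) / \<delta>E"
  have "measure \<mu> (cball z (t * (c * \<rho>))) < ?k * measure \<mu> (cball z (c * \<rho>))"
    by (rule efd_power_decay[OF assms(1) \<epsilon>E \<delta>E efd z(1) c\<rho> t])
  also have "\<dots> \<le> ?k * measure \<mu> (cball x (\<rho> / \<epsilon>F))"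
  proof -
    have "\<rho> + c * \<rho> = \<rho> / \<epsilon>F" using \<epsilon>F by (simp add: c_def field_simps)
    then have "cball z (c * \<rho>) \<subseteq> cball x (\<rho> / \<epsilon>F)" using z(2) by (auto simp: dist_real_def)
    then show ?thesis
      using locally_finite_borel_sets[OF assms(1)] \<delta>E
      by (intro mult_left_mono locally_finite_borel_measure_mono_cball[OF assms(1)]) auto
  qed
  also have "\<dots> \<le> ?k * (measure \<mu> (cball x \<rho>) / \<delta>F)"
    using federer_enlarge[OF assms(1) \<epsilon>F(1) fed x \<rho>(1,2)] \<open>0 < \<delta>F\<close> \<delta>E
    by (intro mult_left_mono) (auto simp: field_simps)
  finally show ?thesis by (simp add: c_def)
qed

lemma federer_efd_imp_abs_decaying:
  assumes "locally_finite_borel \<mu>" and "federer \<mu>" and "efd \<mu>"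
  shows "abs_decaying \<mu>"
proof -
  obtain \<rho>F \<epsilon>F \<delta>F where "\<rho>F > 0" and \<epsilon>F: "0 < \<epsilon>F" "\<epsilon>F < 1" and \<delta>F: "0 < \<delta>F" "\<delta>F < 1"
    and fed: "\<And>\<rho> x. 0 < \<rho> \<Longrightarrow> \<rho> \<le> \<rho>F \<Longrightarrow> x \<in> msupp \<mu> \<Longrightarrow>
        measure \<mu> (cball x (\<epsilon>F * \<rho>)) / measure \<mu> (cball x \<rho>) \<ge> \<delta>F"
    using assms(2) unfolding federer_def by metis
  obtain \<rho>E \<epsilon>E \<delta>E where "\<rho>E > 0" and \<epsilon>E: "0 < \<epsilon>E" "\<epsilon>E < 1" and \<delta>E: "0 < \<delta>E" "\<delta>E < 1"
    and efd: "\<And>\<rho> x. 0 < \<rho> \<Longrightarrow> \<rho> \<le> \<rho>E \<Longrightarrow> x \<in> msupp \<mu> \<Longrightarrow>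
        measure \<mu> (cball x (\<epsilon>E * \<rho>)) / measure \<mu> (cball x \<rho>) \<le> \<delta>E"
    using assms(3) unfolding efd_def by metis
  define c where "c = 1 / \<epsilon>F - 1"
  define \<rho>0 where "\<rho>0 = min (\<epsilon>F * \<rho>F) (\<rho>E / c)"
  define \<gamma> where "\<gamma> = ln \<delta>E / ln \<epsilon>E"
  define C where "C = (2 / c) powr \<gamma> / (\<delta>E * \<delta>F)"
  have c: "c > 0" using \<epsilon>F by (simp add: c_def)
  have "\<rho>0 > 0" using \<epsilon>F c \<open>\<rho>F > 0\<close> \<open>\<rho>E > 0\<close> by (simp add: \<rho>0_def)
  have "\<gamma> > 0" using \<epsilon>E \<delta>E by (simp add: \<gamma>_def divide_neg_neg)
  have "C > 0" using c \<delta>E \<delta>F by (simp add: C_def)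
  have "measure \<mu> (cball x \<rho> \<inter> cball y (\<epsilon> * \<rho>)) < C * \<epsilon> powr \<gamma> * measure \<mu> (cball x \<rho>)"
    if \<rho>: "0 < \<rho>" "\<rho> \<le> \<rho>0" and x: "x \<in> msupp \<mu>" and \<epsilon>: "\<epsilon> > 0" for \<rho> x y \<epsilon>
  proof -
    define I where "I = cball x \<rho> \<inter> cball y (\<epsilon> * \<rho>)"
    define M where "M = measure \<mu> (cball x \<rho>)"
    \<comment> \<open>\<open>I\<close> has diameter \<open>2\<epsilon>\<rho> = t c \<rho>\<close>.\<close>
    define t where "t = 2 * \<epsilon> / c"
    have "M > 0" unfolding M_def by (rule measure_cball_msupp_pos[OF assms(1) x \<rho>(1)])
    have "t > 0" using \<epsilon> c by (simp add: t_def)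
    have scale: "C * \<epsilon> powr \<gamma> = t powr \<gamma> / (\<delta>E * \<delta>F)"
      using \<epsilon> c by (simp add: C_def t_def powr_mult powr_divide)
    have I: "I \<in> sets \<mu>" "compact I" using locally_finite_borel_sets[OF assms(1)] by (auto simp: I_def)
    consider "1 \<le> t" | "I \<inter> msupp \<mu> = {}" | z where "z \<in> I" "z \<in> msupp \<mu>" "t < 1" by force
    then have "measure \<mu> I < t powr \<gamma> / (\<delta>E * \<delta>F) * M"
    proof cases
      case 1
      have "measure \<mu> I \<le> M" unfolding M_def
        using I(1) by (intro locally_finite_borel_measure_mono_cball[OF assms(1)]) (auto simp: I_def)
      also have "\<dots> < 1 / (\<delta>E * \<delta>F) * M"
        using \<open>M > 0\<close> \<delta>E \<delta>F mult_strict_mono[of \<delta>E 1 \<delta>F 1] by (simp add: field_simps)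
      also have "\<dots> \<le> t powr \<gamma> / (\<delta>E * \<delta>F) * M"
        using 1 \<open>\<gamma> > 0\<close> \<open>M > 0\<close> \<delta>E \<delta>F
        by (intro mult_right_mono divide_right_mono ge_one_powr_ge_zero) auto
      finally show ?thesis .
    next
      case 2
      then have "measure \<mu> I = 0"
        using emeasure_compact_outside_msupp[OF locally_finite_borel_sets[OF assms(1)] I(2)]
        by (simp add: measure_def)
      then show ?thesis using \<open>t > 0\<close> \<open>M > 0\<close> \<delta>E \<delta>F by simp
    next
      case (3 z)
      have "I \<subseteq> cball z (t * (c * \<rho>))" using 3(1) c by (auto simp: I_def t_def dist_real_def)
      then have "measure \<mu> I \<le> measure \<mu> (cball z (t * (c * \<rho>)))"
        using I(1) by (rule locally_finite_borel_measure_mono_cball[OF assms(1)])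
      also have "\<dots> < t powr \<gamma> / (\<delta>E * \<delta>F) * M"
        unfolding M_def \<gamma>_def c_def
        using federer_efd_ball_near_support[OF assms(1) \<epsilon>F \<delta>F(1) fed \<epsilon>E \<delta>E efd x 3(2) _ \<rho>(1)]
          3 \<rho>(2) c \<open>t > 0\<close> by (auto simp: I_def \<rho>0_def c_def le_divide_eq mult.commute)
      finally show ?thesis .
    qed
    then show ?thesis unfolding I_def M_def scale by simp
  qed
  then have "abs_decaying_with \<mu> C \<gamma>"
    unfolding abs_decaying_with_iff_measure[OF assms(1)] using \<open>C > 0\<close> \<open>\<gamma> > 0\<close> \<open>\<rho>0 > 0\<close> by blast
  then show ?thesis unfolding abs_decaying_def by blast
qed

theorem proposition2p4:
  fixes \<mu> :: "real measure"
  assumes "locally_finite_borel \<mu>"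
  shows "abs_decaying \<mu> \<longleftrightarrow> federer \<mu> \<and> efd \<mu>"
proof
  assume "abs_decaying \<mu>"
  then obtain C \<gamma> where "abs_decaying_with \<mu> C \<gamma>" unfolding abs_decaying_def by blast
  then show "federer \<mu> \<and> efd \<mu>"
    using abs_decaying_with_imp_federer[OF assms] abs_decaying_with_imp_efd[OF assms] by blast
next
  assume "federer \<mu> \<and> efd \<mu>"
  then show "abs_decaying \<mu>" using federer_efd_imp_abs_decaying[OF assms] by blast
qed

end
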